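(* Consider $\min f(x)$ s.t. $g(x)\in K$ with $f,g$ twice continuously differentiable and $K\subseteq\mathbb{R}^m$ closed; $C:=g^{-1}(K)$. Let $d\in T_C(\bar x)$ and $\bar x$ be a local optimal solution in direction $d$ with $\nabla f(\bar x)d=0$. Then for every $\lambda\in\mathbb{R}^m$ with $\nabla_xL(\bar x,\lambda)=0$: (i) $\sigma_\Theta(\lambda)\le0$; (ii) $\nabla_{xx}^2L(\bar x,\lambda)(d,d)-\sigma_\Omega(\lambda)=\alpha\ge0$, where $\alpha:=\inf_{w\in T_C^2(\bar x;d)}\big(\nabla f(\bar x)w+\nabla^2f(\bar x)(d,d)\big)$.
   Context: $L(x,\lambda):=f(x)+\langle\lambda,g(x)\rangle$. $\Theta:=\nabla g(\bar x)\big(T_C^{''}(\bar x;d)\big)$ and $\Omega:=\nabla g(\bar x)\big(T_C^2(\bar x;d)\big)+\nabla^2g(\bar x)(d,d)$, where $\nabla^2g(\bar x)(d,d):=(d^T\nabla^2g_i(\bar x)d)_{i=1}^m$. $T_C^2(\bar x;d):=\{w\mid \exists t_k\downarrow 0,\ w_k\to w,\ \bar x+t_kd+\tfrac12 t_k^2w_k\in C\}$; $T_C^{''}(\bar x;d):=\{w\mid \exists (t_k,r_k)\downarrow(0,0),\ w_k\to w,\ t_k/r_k\to0,\ \bar x+t_kd+\tfrac12 t_kr_kw_k\in C\}$. $\sigma_S(\lambda):=\sup_{u\in S}\langle\lambda,u\rangle$, with $\sigma_\emptyset\equiv-\infty$ and $\inf\emptyset=+\infty$. $V_{\rho,\delta}(d):=\{w\in\delta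 B_{\mathbb{R}^n}\mid \|\,\|d\|w-\|w\|d\,\|\le\rho\|w\|\|d\|\}$; $\bar x\in C$ is local optimal in direction $d$ if for some $\rho,\delta>0$, $f(x)\ge f(\bar x)$ for all $x\in C\cap(\bar x+V_{\rho,\delta}(d))$. *)

theory Defs
  imports "HOL-Analysis.Analysis"
begin

definition tangent_cone :: "'a::real_normed_vector set \<Rightarrow> 'a \<Rightarrow> 'a set" where
  "tangent_cone C x = {d. \<exists>(t::nat \<Rightarrow> real) dk.
      (\<forall>k. t k > 0) \<and> t \<longlonglongrightarrow> 0 \<and> dk \<longlonglongrightarrow> d \<and> (\<forall>k. x + t k *\<^sub>R dk k \<in> C)}"

definition second_tangent_set :: "'a::real_normed_vector set \<Rightarrow> 'a \<Rightarrow> 'a \<Rightarrow> 'a set" where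
  "second_tangent_set C x d = {w. \<exists>(t::nat \<Rightarrow> real) wk.
      (\<forall>k. t k > 0) \<and> t \<longlonglongrightarrow> 0 \<and> wk \<longlonglongrightarrow> w \<and>
      (\<forall>k. x + t k *\<^sub>R d + ((1/2) * (t k)^2) *\<^sub>R wk k \<in> C)}"

definition asymptotic_second_tangent_cone :: "'a::real_normed_vector set \<Rightarrow> 'a \<Rightarrow> 'a \<Rightarrow> 'a set" where
  "asymptotic_second_tangent_cone C x d = {w. \<exists>(t::nat \<Rightarrow> real) (r::nat \<Rightarrow> real) wk.
      (\<forall>k. t k > 0 \<and> r k > 0) \<and> t \<longlonglongrightarrow> 0 \<and> r \<longlonglongrightarrow> 0 \<and> (\<lambda>k. t k / r k) \<longlonglongrightarrow> 0 \<and>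
      wk \<longlonglongrightarrow> w \<and> (\<forall>k. x + t k *\<^sub>R d + ((1/2) * t k * r k) *\<^sub>R wk k \<in> C)}"

text \<open>Support function with values in extended reals (sigma of the empty set is -infinity).\<close>
definition support_fun :: "'a::real_inner set \<Rightarrow> 'a \<Rightarrow> ereal" where
  "support_fun S l = (SUP u\<in>S. ereal (l \<bullet> u))"

definition dir_nbhd :: "real \<Rightarrow> real \<Rightarrow> 'a::real_normed_vector \<Rightarrow> 'a set" where
  "dir_nbhd \<rho> \<delta> d = {w. w \<in> cball 0 \<delta> \<and>
      norm (norm d *\<^sub>R w - norm w *\<^sub>R d) \<le> \<rho> * norm w * norm d}"

definition local_opt_in_dir :: "('a::real_normed_vector \<Rightarrow> real) \<Rightarrow> 'a set \<Rightarrow> 'a \<Rightarrow> 'a \<Rightarrow> bool" where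
  "local_opt_in_dir f C x d \<longleftrightarrow> x \<in> C \<and>
     (\<exists>\<rho>>0. \<exists>\<delta>>0. \<forall>y \<in> C \<inter> ((\<lambda>w. x + w) ` dir_nbhd \<rho> \<delta> d). f y \<ge> f x)"

end

theory Submission
  imports Defs
begin

text \<open>
  Take a feasible sequence \<open>x + t\<^sub>k d + (t\<^sub>k r\<^sub>k / 2) w\<^sub>k\<close> with \<open>t\<^sub>k, r\<^sub>k \<rightarrow> 0\<close>,
  \<open>w\<^sub>k \<rightarrow> w\<close> and \<open>t\<^sub>k / r\<^sub>k \<rightarrow> c\<close>. It eventually lies in the directional neighbourhood of \<open>x\<close>,
  so \<open>f\<close> does not decrease along it. By Taylor's formula and \<open>Df x d = 0\<close> the increase is
  \<open>t\<^sub>k r\<^sub>k Df x w\<^sub>k / 2 + t\<^sub>k\<^sup>2 D2f x d d / 2 + o(t\<^sub>k\<^sup>2)\<close>; dividing by \<open>t\<^sub>k r\<^sub>k\<close> gives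
  \<open>Df x w + c D2f x d d \<ge> 0\<close>, i.e. \<open>Df x w \<ge> 0\<close> on \<open>T''\<close> (\<open>c = 0\<close>) and
  \<open>Df x w + D2f x d d \<ge> 0\<close> on \<open>T\<^sup>2\<close> (\<open>c = 1\<close>). The multiplier identity
  \<open>\<lambda> \<bullet> Dg v = - Df x v\<close> turns both support functions into these quantities.
\<close>

lemma has_vector_derivative_along_line:
  fixes F :: "'a::real_normed_vector \<Rightarrow> 'b::real_normed_vector"
  assumes "\<And>y. (F has_derivative blinfun_apply (DF y)) (at y)"
  shows "((\<lambda>s. F (x + s *\<^sub>R h)) has_vector_derivative DF (x + s *\<^sub>R h) h) (at s)"
proof -
  have "((\<lambda>s. x + s *\<^sub>R h) has_derivative (\<lambda>u. u *\<^sub>R h)) (at s)"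
    by (auto intro!: derivative_eq_intros)
  from has_derivative_compose[OF this assms] show ?thesis
    by (simp add: has_vector_derivative_def blinfun.scaleR_right)
qed

lemma taylor_lagrange_second_order:
  fixes f :: "'a::real_normed_vector \<Rightarrow> real"
  assumes f_D: "\<And>x. (f has_derivative blinfun_apply (Df x)) (at x)"
    and f_D2: "\<And>x. (Df has_derivative blinfun_apply (D2f x)) (at x)"
  obtains t where "0 < t" "t < 1" "f (x + h) = f x + Df x h + D2f (x + t *\<^sub>R h) h h / 2"
proof -
  define diff where "diff m = (if m = 0 then (\<lambda>s. f (x + s *\<^sub>R h))
     else if m = 1 then (\<lambda>s. Df (x + s *\<^sub>R h) h) else (\<lambda>s. D2f (x + s *\<^sub>R h) h h))" for m :: nat
  have "DERIV (diff m) s :> diff (Suc m) s" if "m < 2" for m s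
  proof -
    have "DERIV (\<lambda>s. f (x + s *\<^sub>R h)) s :> Df (x + s *\<^sub>R h) h"
      using has_vector_derivative_along_line[OF f_D]
      by (simp add: has_real_derivative_iff_has_vector_derivative)
    moreover have "DERIV (\<lambda>s. Df (x + s *\<^sub>R h) h) s :> D2f (x + s *\<^sub>R h) h h"
      using bounded_linear.has_vector_derivative[OF bounded_bilinear.bounded_linear_left[OF bounded_bilinear_blinfun_apply]
          has_vector_derivative_along_line[OF f_D2]]
      by (simp add: has_real_derivative_iff_has_vector_derivative)
    ultimately show ?thesis
      using that by (auto simp: diff_def less_2_cases_iff)
  qed
  from Taylor[of 2 diff "\<lambda>s. f (x + s *\<^sub>R h)" 0 1 0 1] this
  obtain t where "0 < t" "t < 1"
    "f (x + 1 *\<^sub>R h) = (\<Sum>m<2. diff m 0 / fact m * (1 - 0) ^ m) + diff 2 t / fact 2 * (1 - 0) ^ 2"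
    by (auto simp: diff_def)
  with that show ?thesis
    by (simp add: diff_def numeral_2_eq_2)
qed

lemma taylor_remainder_little_o:
  fixes f :: "'a::real_normed_vector \<Rightarrow> real"
  assumes f_D: "\<And>x. (f has_derivative blinfun_apply (Df x)) (at x)"
    and f_D2: "\<And>x. (Df has_derivative blinfun_apply (D2f x)) (at x)"
    and cont: "isCont D2f x"
  shows "((\<lambda>h. (f (x + h) - f x - Df x h - D2f x h h / 2) / (norm h)\<^sup>2) \<longlongrightarrow> 0) (at 0)"
proof (rule tendstoI)
  fix e :: real assume "e > 0"
  then obtain \<delta> where "\<delta> > 0" and \<delta>: "\<And>y. dist y x < \<delta> \<Longrightarrow> dist (D2f y) (D2f x) < e"
    using cont unfolding continuous_at_eps_delta by blast
  have "\<bar>f (x + h) - f x - Df x h - D2f x h h / 2\<bar> \<le> e / 2 * (norm h)\<^sup>2" if "norm h < \<delta>" for h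
  proof -
    obtain t where t: "0 < t" "t < 1" "f (x + h) = f x + Df x h + D2f (x + t *\<^sub>R h) h h / 2"
      using taylor_lagrange_second_order[OF f_D f_D2] .
    have "dist (x + t *\<^sub>R h) x < \<delta>"
      using t that mult_left_le_one_le[of "norm h" t] by (simp add: dist_norm)
    then have E: "norm (D2f (x + t *\<^sub>R h) - D2f x) \<le> e"
      using \<delta> by (simp add: dist_norm less_imp_le)
    have "\<bar>f (x + h) - f x - Df x h - D2f x h h / 2\<bar> = \<bar>(D2f (x + t *\<^sub>R h) - D2f x) h h\<bar> / 2"
      using t(3) by (simp add: blinfun.diff_left abs_if)
    also have "\<dots> \<le> norm (D2f (x + t *\<^sub>R h) - D2f x) * norm h * norm h / 2"
      using norm_blinfun[of "D2f (x + t *\<^sub>R h) - D2f x" h]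
        norm_blinfun[of "(D2f (x + t *\<^sub>R h) - D2f x) h" h]
      by (simp add: mult_right_mono order.trans)
    also have "\<dots> \<le> e / 2 * (norm h)\<^sup>2"
      using E by (simp add: power2_eq_square mult.assoc mult_right_mono)
    finally show ?thesis .
  qed
  then have "eventually (\<lambda>h. \<bar>f (x + h) - f x - Df x h - D2f x h h / 2\<bar> \<le> e / 2 * (norm h)\<^sup>2) (at 0)"
    using \<open>\<delta> > 0\<close> by (auto simp: eventually_at dist_norm)
  moreover have "eventually (\<lambda>h. h \<noteq> 0) (at (0::'a))"
    by (simp add: eventually_at_filter)
  ultimately show "eventually (\<lambda>h. dist ((f (x + h) - f x - Df x h - D2f x h h / 2) / (norm h)\<^sup>2) 0 < e) (at 0)"
  proof eventually_elim
    case (elim h)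
    then have "\<bar>f (x + h) - f x - Df x h - D2f x h h / 2\<bar> / (norm h)\<^sup>2 \<le> e / 2"
      by (simp add: pos_divide_le_eq)
    with \<open>e > 0\<close> have "\<bar>f (x + h) - f x - Df x h - D2f x h h / 2\<bar> / (norm h)\<^sup>2 < e"
      by linarith
    then show ?case
      by (simp add: dist_real_def abs_divide)
  qed
qed

lemma taylor_remainder_tendsto_sequentially:
  fixes f :: "'a::real_normed_vector \<Rightarrow> real"
  assumes f_D: "\<And>x. (f has_derivative blinfun_apply (Df x)) (at x)"
    and f_D2: "\<And>x. (Df has_derivative blinfun_apply (D2f x)) (at x)"
    and cont: "isCont D2f x"
    and s: "s \<longlonglongrightarrow> 0" and v: "v \<longlonglongrightarrow> v0"
  shows "(\<lambda>k. (f (x + s k *\<^sub>R v k) - f x - Df x (s k *\<^sub>R v k)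
            - D2f x (s k *\<^sub>R v k) (s k *\<^sub>R v k) / 2) / (s k)\<^sup>2) \<longlonglongrightarrow> 0"
proof -
  define rem where "rem h = f (x + h) - f x - Df x h - D2f x h h / 2" for h
  define F where "F h = rem h / (norm h)\<^sup>2" for h
  have "isCont F 0"
    using taylor_remainder_little_o[OF f_D f_D2 cont]
    by (simp add: isCont_def F_def [abs_def] rem_def)
  moreover have "(\<lambda>k. s k *\<^sub>R v k) \<longlonglongrightarrow> 0"
    using tendsto_scaleR[OF s v] by simp
  ultimately have "(\<lambda>k. F (s k *\<^sub>R v k) * (norm (v k))\<^sup>2) \<longlonglongrightarrow> F 0 * (norm v0)\<^sup>2"
    by (intro tendsto_intros isCont_tendsto_compose[of 0 F] v)
  \<comment> \<open>Also for \<open>s k = 0\<close> or \<open>v k = 0\<close>: then both sides are \<open>0\<close>, as \<open>rem 0 = 0\<close> and \<open>x / 0 = 0\<close>.\<close>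
  moreover have "rem (s k *\<^sub>R v k) / (s k)\<^sup>2 = F (s k *\<^sub>R v k) * (norm (v k))\<^sup>2" for k
    by (cases "v k = 0") (simp_all add: F_def rem_def power_mult_distrib)
  ultimately show ?thesis
    by (simp add: F_def rem_def)
qed

lemma eventually_scaleR_in_dir_nbhd:
  fixes d :: "'a::real_normed_vector"
  assumes "\<rho> > 0" "\<delta> > 0" and s_nonneg: "\<And>k. s k \<ge> 0" and s: "s \<longlonglongrightarrow> 0"
    and v: "v \<longlonglongrightarrow> d"
  shows "eventually (\<lambda>k. s k *\<^sub>R v k \<in> dir_nbhd \<rho> \<delta> d) sequentially"
proof -
  have "(\<lambda>k. norm (s k *\<^sub>R v k)) \<longlonglongrightarrow> 0"
    using tendsto_norm[OF tendsto_scaleR[OF s v]] by simp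
  then have small: "eventually (\<lambda>k. norm (s k *\<^sub>R v k) < \<delta>) sequentially"
    using \<open>\<delta> > 0\<close> by (rule order_tendstoD)
  have aligned: "eventually (\<lambda>k. norm (norm d *\<^sub>R v k - norm (v k) *\<^sub>R d) \<le> \<rho> * norm (v k) * norm d) sequentially"
  proof (cases "d = 0")
    case False
    have "(\<lambda>k. \<rho> * norm (v k) * norm d - norm (norm d *\<^sub>R v k - norm (v k) *\<^sub>R d))
       \<longlonglongrightarrow> \<rho> * norm d * norm d - norm (norm d *\<^sub>R d - norm d *\<^sub>R d)"
      by (intro tendsto_intros v)
    moreover have "\<rho> * norm d * norm d - norm (norm d *\<^sub>R d - norm d *\<^sub>R d) > 0"
      using False \<open>\<rho> > 0\<close> by simp
    ultimately have "eventually (\<lambda>k. \<rho> * norm (v k) * norm d - norm (norm d *\<^sub>R v k - norm (v k) *\<^sub>R d) > 0) sequentially"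
      by (rule order_tendstoD)
    then show ?thesis
      by eventually_elim simp
  qed simp
  show ?thesis
    using small aligned
  proof eventually_elim
    case (elim k)
    have "norm d *\<^sub>R (s k *\<^sub>R v k) - norm (s k *\<^sub>R v k) *\<^sub>R d
        = s k *\<^sub>R (norm d *\<^sub>R v k - norm (v k) *\<^sub>R d)"
      using s_nonneg[of k] by (simp add: scaleR_diff_right)
    then have "norm (norm d *\<^sub>R (s k *\<^sub>R v k) - norm (s k *\<^sub>R v k) *\<^sub>R d)
        = s k * norm (norm d *\<^sub>R v k - norm (v k) *\<^sub>R d)"
      using s_nonneg[of k] by simp
    also have "\<dots> \<le> s k * (\<rho> * norm (v k) * norm d)"
      using elim s_nonneg[of k] by (intro mult_left_mono) auto
    also have "\<dots> = \<rho> * norm (s k *\<^sub>R v k) * norm d"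
      using s_nonneg[of k] by simp
    finally show ?case
      using elim unfolding dir_nbhd_def by simp
  qed
qed

lemma local_opt_in_dir_second_order_condition:
  fixes f :: "'a::real_normed_vector \<Rightarrow> real"
  assumes f_D: "\<And>x. (f has_derivative blinfun_apply (Df x)) (at x)"
    and f_D2: "\<And>x. (Df has_derivative blinfun_apply (D2f x)) (at x)"
    and cont: "isCont D2f x"
    and loc: "local_opt_in_dir f C x d" and crit: "Df x d = 0"
    and t_pos: "\<And>k. t k > 0" and r_pos: "\<And>k. r k > 0"
    and t: "t \<longlonglongrightarrow> 0" and r: "r \<longlonglongrightarrow> 0" and ratio: "(\<lambda>k. t k / r k) \<longlonglongrightarrow> c"
    and w: "wk \<longlonglongrightarrow> w"
    and feasible: "\<And>k. x + t k *\<^sub>R d + ((1/2) * t k * r k) *\<^sub>R wk k \<in> C"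
  shows "Df x w + c * D2f x d d \<ge> 0"
proof -
  obtain \<rho> \<delta> where "\<rho> > 0" "\<delta> > 0"
    and opt: "\<And>y. y \<in> C \<inter> (\<lambda>w. x + w) ` dir_nbhd \<rho> \<delta> d \<Longrightarrow> f y \<ge> f x"
    using loc unfolding local_opt_in_dir_def by blast
  define v where "v k = d + (r k / 2) *\<^sub>R wk k" for k
  have v: "v \<longlonglongrightarrow> d"
    using tendsto_add[OF tendsto_const tendsto_scaleR[OF tendsto_divide_zero[OF r] w]]
    by (simp add: v_def [abs_def])
  have point: "x + t k *\<^sub>R v k = x + t k *\<^sub>R d + ((1/2) * t k * r k) *\<^sub>R wk k" for k
    by (simp add: v_def scaleR_add_right)
  define R where "R k = (f (x + t k *\<^sub>R v k) - f x - Df x (t k *\<^sub>R v k)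
            - D2f x (t k *\<^sub>R v k) (t k *\<^sub>R v k) / 2) / (t k)\<^sup>2" for k
  have R: "R \<longlonglongrightarrow> 0"
    unfolding R_def [abs_def] by (rule taylor_remainder_tendsto_sequentially[OF f_D f_D2 cont t v])
  define q where "q k = Df x (wk k) / 2 + (t k / r k) * (D2f x (v k) (v k) / 2 + R k)" for k
  have q: "q \<longlonglongrightarrow> Df x w / 2 + c * (D2f x d d / 2 + 0)"
    unfolding q_def [abs_def] by (intro tendsto_intros w v R ratio) simp_all
  \<comment> \<open>By \<open>Df x d = 0\<close>, the first-order term of the expansion is of order \<open>t r\<close>, not \<open>t\<close>.\<close>
  have q_eq: "q k = (f (x + t k *\<^sub>R v k) - f x) / (t k * r k)" for k
  proof -
    have "Df x (t k *\<^sub>R v k) = t k * r k / 2 * Df x (wk k)"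
      by (simp add: v_def blinfun.scaleR_right blinfun.add_right crit)
    moreover have "D2f x (t k *\<^sub>R v k) (t k *\<^sub>R v k) = (t k)\<^sup>2 * D2f x (v k) (v k)"
      by (simp add: blinfun.scaleR_right blinfun.scaleR_left power2_eq_square)
    ultimately show ?thesis
      using t_pos[of k] r_pos[of k] by (simp add: q_def R_def field_simps power2_eq_square)
  qed
  have "eventually (\<lambda>k. t k *\<^sub>R v k \<in> dir_nbhd \<rho> \<delta> d) sequentially"
    using eventually_scaleR_in_dir_nbhd[OF \<open>\<rho> > 0\<close> \<open>\<delta> > 0\<close> _ t v] t_pos less_imp_le by blast
  then have "eventually (\<lambda>k. q k \<ge> 0) sequentially"
  proof eventually_elim
    case (elim k)
    then have "x + t k *\<^sub>R v k \<in> (\<lambda>w. x + w) ` dir_nbhd \<rho> \<delta> d"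
      by blast
    with feasible[of k] have "f (x + t k *\<^sub>R v k) \<ge> f x"
      by (intro opt) (simp add: point)
    then show ?case
      using t_pos[of k] r_pos[of k] by (simp add: q_eq)
  qed
  with q have "Df x w / 2 + c * (D2f x d d / 2 + 0) \<ge> 0"
    by (intro tendsto_lowerbound) auto
  then show ?thesis
    by simp
qed

lemma second_tangent_set_nonneg:
  fixes f :: "'a::real_normed_vector \<Rightarrow> real"
  assumes f_D: "\<And>x. (f has_derivative blinfun_apply (Df x)) (at x)"
    and f_D2: "\<And>x. (Df has_derivative blinfun_apply (D2f x)) (at x)"
    and cont: "isCont D2f x"
    and loc: "local_opt_in_dir f C x d" and crit: "Df x d = 0"
    and "w \<in> second_tangent_set C x d"
  shows "Df x w + D2f x d d \<ge> 0"
proof -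
  obtain t :: "nat \<Rightarrow> real" and wk where t_pos: "\<And>k. t k > 0" and "t \<longlonglongrightarrow> 0" "wk \<longlonglongrightarrow> w"
    and feasible: "\<And>k. x + t k *\<^sub>R d + ((1/2) * (t k)\<^sup>2) *\<^sub>R wk k \<in> C"
    using assms(6) unfolding second_tangent_set_def by blast
  moreover have "(\<lambda>k. t k / t k) \<longlonglongrightarrow> 1"
    using t_pos by (simp add: less_imp_neq [THEN not_sym])
  ultimately show ?thesis
    using local_opt_in_dir_second_order_condition[OF f_D f_D2 cont loc crit, of t t 1 wk w]
    by (simp add: power2_eq_square mult.assoc)
qed

lemma asymptotic_second_tangent_cone_nonneg:
  fixes f :: "'a::real_normed_vector \<Rightarrow> real"
  assumes f_D: "\<And>x. (f has_derivative blinfun_apply (Df x)) (at x)"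
    and f_D2: "\<And>x. (Df has_derivative blinfun_apply (D2f x)) (at x)"
    and cont: "isCont D2f x"
    and loc: "local_opt_in_dir f C x d" and crit: "Df x d = 0"
    and "w \<in> asymptotic_second_tangent_cone C x d"
  shows "Df x w \<ge> 0"
proof -
  obtain t r :: "nat \<Rightarrow> real" and wk where "\<And>k. t k > 0 \<and> r k > 0"
    "t \<longlonglongrightarrow> 0" "r \<longlonglongrightarrow> 0" "(\<lambda>k. t k / r k) \<longlonglongrightarrow> 0" "wk \<longlonglongrightarrow> w"
    "\<And>k. x + t k *\<^sub>R d + ((1/2) * t k * r k) *\<^sub>R wk k \<in> C"
    using assms(6) unfolding asymptotic_second_tangent_cone_def by blast
  then show ?thesis
    using local_opt_in_dir_second_order_condition[OF f_D f_D2 cont loc crit, of t r 0 wk w]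
    by simp
qed

lemma ereal_minus_SUP_diff:
  fixes h :: "'a \<Rightarrow> real"
  shows "ereal a - (SUP w\<in>S. ereal (a - h w)) = (INF w\<in>S. ereal (h w))"
proof (cases "S = {}")
  case False
  have "(SUP w\<in>S. ereal (a - h w)) = ereal a - (INF w\<in>S. ereal (h w))"
    using SUP_ereal_minus_right[OF False, of "ereal a" "\<lambda>w. ereal (h w)"] by simp
  then show ?thesis
    by (cases "INF w\<in>S. ereal (h w)") simp_all
qed (simp add: bot_ereal_def top_ereal_def)

lemma second_order_necessary_conditions:
  fixes f :: "'a::real_normed_vector \<Rightarrow> real" and Dg :: "'a \<Rightarrow> 'b::real_inner"
  assumes f_D: "\<And>x. (f has_derivative blinfun_apply (Df x)) (at x)"
    and f_D2: "\<And>x. (Df has_derivative blinfun_apply (D2f x)) (at x)"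
    and cont: "isCont D2f x"
    and loc: "local_opt_in_dir f C x d" and crit: "Df x d = 0"
    and multiplier: "\<And>v. Df x v + lam \<bullet> Dg v = 0"
  shows "support_fun (Dg ` asymptotic_second_tangent_cone C x d) lam \<le> 0"
    and "ereal (D2f x d d + lam \<bullet> u) - support_fun ((\<lambda>w. Dg w + u) ` second_tangent_set C x d) lam
      = (INF w\<in>second_tangent_set C x d. ereal (Df x w + D2f x d d))"
proof -
  have lam_Dg: "lam \<bullet> Dg v = - Df x v" for v
    using multiplier[of v] by linarith
  show "support_fun (Dg ` asymptotic_second_tangent_cone C x d) lam \<le> 0"
    unfolding support_fun_def
    by (auto intro!: SUP_least simp: lam_Dg asymptotic_second_tangent_cone_nonneg[OF f_D f_D2 cont loc crit])
  have "support_fun ((\<lambda>w. Dg w + u) ` second_tangent_set C x d) lam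
      = (SUP w\<in>second_tangent_set C x d. ereal (D2f x d d + lam \<bullet> u - (Df x w + D2f x d d)))"
    unfolding support_fun_def by (simp add: image_comp inner_add_right lam_Dg)
  then show "ereal (D2f x d d + lam \<bullet> u) - support_fun ((\<lambda>w. Dg w + u) ` second_tangent_set C x d) lam
      = (INF w\<in>second_tangent_set C x d. ereal (Df x w + D2f x d d))"
    by (simp only: ereal_minus_SUP_diff)
qed

theorem theorem4p2:
  fixes f :: "'a::euclidean_space \<Rightarrow> real"
    and Df :: "'a \<Rightarrow> ('a \<Rightarrow>\<^sub>L real)"
    and D2f :: "'a \<Rightarrow> ('a \<Rightarrow>\<^sub>L ('a \<Rightarrow>\<^sub>L real))"
    and g :: "'a \<Rightarrow> 'b::euclidean_space"
    and Dg :: "'a \<Rightarrow> ('a \<Rightarrow>\<^sub>L 'b)"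
    and D2g :: "'a \<Rightarrow> ('a \<Rightarrow>\<^sub>L ('a \<Rightarrow>\<^sub>L 'b))"
    and K :: "'b set" and xbar d :: 'a
  assumes f_D: "\<And>x. (f has_derivative blinfun_apply (Df x)) (at x)"
    and f_D2: "\<And>x. (Df has_derivative blinfun_apply (D2f x)) (at x)"
    and f_cont: "continuous_on UNIV D2f"
    and g_D: "\<And>x. (g has_derivative blinfun_apply (Dg x)) (at x)"
    and g_D2: "\<And>x. (Dg has_derivative blinfun_apply (D2g x)) (at x)"
    and g_cont: "continuous_on UNIV D2g"
    and K_closed: "closed K"
    and d_tan: "d \<in> tangent_cone (g -` K) xbar"
    and loc: "local_opt_in_dir f (g -` K) xbar d"
    and crit: "Df xbar d = 0"
  shows "\<forall>lam::'b. (\<forall>v. Df xbar v + lam \<bullet> Dg xbar v = 0) \<longrightarrow>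
     support_fun (blinfun_apply (Dg xbar) ` asymptotic_second_tangent_cone (g -` K) xbar d) lam \<le> 0 \<and>
     (let \<alpha> = (INF w\<in>second_tangent_set (g -` K) xbar d. ereal (Df xbar w + D2f xbar d d))
      in ereal (D2f xbar d d + lam \<bullet> D2g xbar d d)
           - support_fun ((\<lambda>w. Dg xbar w + D2g xbar d d) ` second_tangent_set (g -` K) xbar d) lam = \<alpha>
         \<and> \<alpha> \<ge> 0)"
proof -
  have "isCont D2f xbar"
    using f_cont by (simp add: continuous_on_eq_continuous_at)
  note conditions = second_order_necessary_conditions[OF f_D f_D2 this loc crit]
    and nonneg = second_tangent_set_nonneg[OF f_D f_D2 this loc crit]
  show ?thesis
    by (intro allI impI) (auto simp: Let_def conditions intro!: INF_greatest nonneg)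
qed

end
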